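(* Let $\mathcal{H}$ be a separable Hilbert space with a fixed orthonormal basis $\mathcal{B}=\{e_k\}_{k\in\mathbb{N}}$ and let $\mathcal{S}$ be a closed subspace of $\mathcal{H}$. The following are equivalent: (1) $\sup_{Q\in\mathcal{P}(\mathcal{D})}c[\mathcal{S},R(Q)]<1$ (i.e. $\mathcal{S}$ is $\mathcal{B}$-compatible); (2) $\sup_{Q\in\mathcal{P}_0(\mathcal{D})}c[\mathcal{S},R(Q)]<1$; (3) $\sup_{Q\in\mathcal{P}_{0,\mathcal{S}}(\mathcal{D})}c[\mathcal{S},R(Q)]<1$.
   Context: $\mathcal{D}$ is the algebra of bounded operators diagonal with respect to $\mathcal{B}$; $\mathcal{P}(\mathcal{D})$ is the set of orthogonal projections in $\mathcal{D}$; $\mathcal{P}_0(\mathcal{D})$ is the set of finite-rank elements of $\mathcal{P}(\mathcal{D})$; $\mathcal{P}_{0,\mathcal{S}}(\mathcal{D})=\{Q\in\mathcal{P}_0(\mathcal{D}):R(Q)\cap\mathcal{S}=\{0\}\}$. For closed subspaces $\mathcal{M},\mathcal{N}$, $c[\mathcal{M},\mathcal{N}]=\sup\{|\langle\xi,\eta\rangle|:\xi\in\mathcal{M}\ominus(\mathcal{M}\cap\mathcal{N}),\ \eta\in\mathcal{N}\ominus(\mathcal{M}\cap\mathcal{N}),\ \|\xi\|=\|\eta\|=1\}$ (cosine of the Friedrichs angle). *)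

theory Defs
  imports Complex_Main "HOL-Library.Function_Algebras"
begin

text \<open>The separable Hilbert space H with fixed orthonormal basis (e_k) indexed by the naturals
  is modelled (up to the unitary identifying e_k with the k-th standard unit vector) as
  complex l2(N): square-summable sequences nat => complex.\<close>

definition l2 :: "(nat \<Rightarrow> complex) set" where
  "l2 = {x. summable (\<lambda>k. (cmod (x k))\<^sup>2)}"

definition l2inner :: "(nat \<Rightarrow> complex) \<Rightarrow> (nat \<Rightarrow> complex) \<Rightarrow> complex" where
  "l2inner x y = (\<Sum>k. x k * cnj (y k))"

definition l2norm :: "(nat \<Rightarrow> complex) \<Rightarrow> real" where
  "l2norm x = sqrt (\<Sum>k. (cmod (x k))\<^sup>2)"

definition basis_vec :: "nat \<Rightarrow> (nat \<Rightarrow> complex)" where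
  "basis_vec j = (\<lambda>k. if k = j then 1 else 0)"

definition closed_subspace :: "(nat \<Rightarrow> complex) set \<Rightarrow> bool" where
  "closed_subspace S \<longleftrightarrow> S \<subseteq> l2 \<and> 0 \<in> S
     \<and> (\<forall>x\<in>S. \<forall>y\<in>S. x + y \<in> S)
     \<and> (\<forall>c::complex. \<forall>x\<in>S. (\<lambda>k. c * x k) \<in> S)
     \<and> (\<forall>X x. (\<forall>n. X n \<in> S) \<and> x \<in> l2 \<and> (\<lambda>n. l2norm (X n - x)) \<longlonglongrightarrow> 0 \<longrightarrow> x \<in> S)"

text \<open>Bounded linear operators on l2 (behaviour outside l2 is irrelevant).\<close>
definition bounded_op :: "((nat \<Rightarrow> complex) \<Rightarrow> (nat \<Rightarrow> complex)) \<Rightarrow> bool" where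
  "bounded_op T \<longleftrightarrow> (\<forall>x\<in>l2. T x \<in> l2)
     \<and> (\<forall>x\<in>l2. \<forall>y\<in>l2. T (x + y) = T x + T y)
     \<and> (\<forall>c::complex. \<forall>x\<in>l2. T (\<lambda>k. c * x k) = (\<lambda>k. c * T x k))
     \<and> (\<exists>C. \<forall>x\<in>l2. l2norm (T x) \<le> C * l2norm x)"

definition diagonal_op :: "((nat \<Rightarrow> complex) \<Rightarrow> (nat \<Rightarrow> complex)) \<Rightarrow> bool" where
  "diagonal_op T \<longleftrightarrow> bounded_op T
     \<and> (\<forall>i j. i \<noteq> j \<longrightarrow> l2inner (T (basis_vec j)) (basis_vec i) = 0)"

definition orth_proj :: "((nat \<Rightarrow> complex) \<Rightarrow> (nat \<Rightarrow> complex)) \<Rightarrow> bool" where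
  "orth_proj T \<longleftrightarrow> bounded_op T \<and> (\<forall>x\<in>l2. T (T x) = T x)
     \<and> (\<forall>x\<in>l2. \<forall>y\<in>l2. l2inner (T x) y = l2inner x (T y))"

definition op_range :: "((nat \<Rightarrow> complex) \<Rightarrow> (nat \<Rightarrow> complex)) \<Rightarrow> (nat \<Rightarrow> complex) set" where
  "op_range T = T ` l2"

definition finite_rank :: "((nat \<Rightarrow> complex) \<Rightarrow> (nat \<Rightarrow> complex)) \<Rightarrow> bool" where
  "finite_rank T \<longleftrightarrow> (\<exists>F. finite F \<and>
     op_range T \<subseteq> {(\<lambda>k. \<Sum>f\<in>F. a f * f k) | a. True})"

definition PD :: "((nat \<Rightarrow> complex) \<Rightarrow> (nat \<Rightarrow> complex)) set" where
  "PD = {Q. diagonal_op Q \<and> orth_proj Q}"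

definition P0D :: "((nat \<Rightarrow> complex) \<Rightarrow> (nat \<Rightarrow> complex)) set" where
  "P0D = {Q \<in> PD. finite_rank Q}"

definition P0SD :: "(nat \<Rightarrow> complex) set \<Rightarrow> ((nat \<Rightarrow> complex) \<Rightarrow> (nat \<Rightarrow> complex)) set" where
  "P0SD S = {Q \<in> P0D. op_range Q \<inter> S = {0}}"

definition orth_diff :: "(nat \<Rightarrow> complex) set \<Rightarrow> (nat \<Rightarrow> complex) set \<Rightarrow> (nat \<Rightarrow> complex) set" where
  "orth_diff M N = {x \<in> M. \<forall>y\<in>N. l2inner x y = 0}"

text \<open>Cosine of the Friedrichs angle; the supremum of the empty set is taken to be 0
  (all values are nonnegative, so inserting 0 is harmless otherwise).\<close>
definition friedrichs_cos :: "(nat \<Rightarrow> complex) set \<Rightarrow> (nat \<Rightarrow> complex) set \<Rightarrow> real" where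
  "friedrichs_cos M N = Sup (insert 0 {cmod (l2inner \<xi> \<eta>) | \<xi> \<eta>.
      \<xi> \<in> orth_diff M (M \<inter> N) \<and> \<eta> \<in> orth_diff N (M \<inter> N)
      \<and> l2norm \<xi> = 1 \<and> l2norm \<eta> = 1})"

end

theory Submission
  imports Defs "HOL-Analysis.L2_Norm"
begin

text \<open>
  Every projection in P(D) is a coordinate projection P_J (coord_proj J), whose range is the
  coordinate subspace l2(J) (coord_subspace J) of sequences vanishing off J. Let c be the supremum of
  c[S, l2(J)] over finite J with S \<inter> l2(J) = {0}, i.e. over P_{0,S}(D); it suffices to show
  c[S, l2(J)] \<le> c for every J, for then all three suprema equal c.

  For finite J with S \<inter> l2(J) = {0}, testing c[S, l2(J)] on \<zeta> \<in> S and P_J \<zeta> gives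
  |P_J \<zeta>| \<le> c |\<zeta>|. For an arbitrary finite J and \<xi> \<in> S orthogonal to S \<inter> l2(J), Gaussian
  elimination yields k \<in> S \<inter> l2(J) such that \<xi> + k vanishes on J outside a subset J' with
  S \<inter> l2(J') = {0}. Applying the first bound to \<xi> + k and Pythagoras to \<xi> \<perp> k, using c \<le> 1,
  gives again |P_J \<xi>| \<le> c |\<xi>|. An infinite J is exhausted by the finite sets J \<inter> {..<n}.
\<close>

section \<open>Square-summable sequences\<close>

lemma finite_support_in_l2:
  assumes "finite A" "\<And>i. i \<notin> A \<Longrightarrow> x i = 0"
  shows "x \<in> l2"
  unfolding l2_def using assms by (auto intro: summable_finite)

lemma summable_l2inner:
  assumes "x \<in> l2" "y \<in> l2"
  shows "summable (\<lambda>k. x k * cnj (y k))"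
proof (rule summable_norm_cancel, rule summable_comparison_test)
  show "summable (\<lambda>k. (cmod (x k))\<^sup>2 + (cmod (y k))\<^sup>2)"
    using assms by (auto simp: l2_def intro: summable_add)
  have "cmod (x k) * cmod (y k) \<le> (cmod (x k))\<^sup>2 + (cmod (y k))\<^sup>2" for k
    using sum_squares_bound[of "cmod (x k)" "cmod (y k)"]
      mult_nonneg_nonneg[OF norm_ge_zero norm_ge_zero, of "x k" "y k"] by linarith
  then show "\<exists>N. \<forall>k\<ge>N. norm (norm (x k * cnj (y k))) \<le> (cmod (x k))\<^sup>2 + (cmod (y k))\<^sup>2"
    by (simp add: norm_mult)
qed

lemma l2inner_finite_support:
  assumes "finite A" "\<And>i. i \<notin> A \<Longrightarrow> y i = 0"
  shows "l2inner x y = (\<Sum>k\<in>A. x k * cnj (y k))"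
  unfolding l2inner_def by (rule suminf_finite) (use assms in auto)

lemma l2inner_basis_vec: "l2inner x (basis_vec i) = x i"
  by (subst l2inner_finite_support[of "{i}"]) (auto simp: basis_vec_def)

lemma l2inner_zero_right [simp]: "l2inner x 0 = 0"
  by (simp add: l2inner_def)

lemma l2inner_scaleC_left:
  assumes "x \<in> l2" "y \<in> l2"
  shows "l2inner (\<lambda>k. a * x k) y = a * l2inner x y"
  unfolding l2inner_def using suminf_mult[OF summable_l2inner[OF assms], of a]
  by (simp add: mult.assoc)

lemma l2inner_scaleC_right:
  assumes "x \<in> l2" "y \<in> l2"
  shows "l2inner x (\<lambda>k. a * y k) = cnj a * l2inner x y"
  unfolding l2inner_def using suminf_mult[OF summable_l2inner[OF assms], of "cnj a"]
  by (simp add: mult.left_commute)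

lemma l2norm_nonneg: "x \<in> l2 \<Longrightarrow> 0 \<le> l2norm x"
  unfolding l2norm_def l2_def by (auto intro: suminf_nonneg)

lemma l2norm_power2: "x \<in> l2 \<Longrightarrow> (l2norm x)\<^sup>2 = (\<Sum>k. (cmod (x k))\<^sup>2)"
  unfolding l2norm_def l2_def by (auto intro: suminf_nonneg)

lemma l2inner_self:
  assumes "x \<in> l2"
  shows "l2inner x x = of_real ((l2norm x)\<^sup>2)"
proof -
  have "l2inner x x = (\<Sum>k. of_real ((cmod (x k))\<^sup>2))"
    by (simp only: l2inner_def complex_norm_square)
  also have "\<dots> = of_real (\<Sum>k. (cmod (x k))\<^sup>2)"
    using assms by (intro suminf_of_real [symmetric]) (simp add: l2_def)
  finally show ?thesis
    by (simp add: l2norm_power2[OF assms])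
qed

lemma l2norm_scaleC:
  assumes "x \<in> l2"
  shows "l2norm (\<lambda>k. a * x k) = cmod a * l2norm x"
proof -
  have "(\<Sum>k. (cmod (a * x k))\<^sup>2) = (cmod a)\<^sup>2 * (\<Sum>k. (cmod (x k))\<^sup>2)"
    using suminf_mult[of "\<lambda>k. (cmod (x k))\<^sup>2" "(cmod a)\<^sup>2"] assms
    by (simp add: l2_def norm_mult power_mult_distrib)
  then show ?thesis by (simp add: l2norm_def real_sqrt_mult)
qed

lemma sqrt_sum_le_l2norm:
  assumes "x \<in> l2" "finite A"
  shows "sqrt (\<Sum>k\<in>A. (cmod (x k))\<^sup>2) \<le> l2norm x"
  unfolding l2norm_def using assms
  by (intro real_sqrt_le_mono sum_le_suminf) (auto simp: l2_def)

lemma sums_cmod_power2_add: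
  assumes "x \<in> l2" "y \<in> l2"
  shows "(\<lambda>k. (cmod ((x + y) k))\<^sup>2) sums ((l2norm x)\<^sup>2 + (l2norm y)\<^sup>2 + 2 * Re (l2inner x y))"
proof -
  have expand: "(cmod ((x + y) k))\<^sup>2 = (cmod (x k))\<^sup>2 + (cmod (y k))\<^sup>2 + 2 * Re (x k * cnj (y k))"
    for k by (simp add: cmod_power2) (simp add: power2_eq_square algebra_simps)
  show ?thesis
    unfolding expand l2norm_power2[OF assms(1)] l2norm_power2[OF assms(2)] l2inner_def
    using assms
    by (intro sums_add sums_mult sums_Re summable_sums summable_l2inner) (auto simp: l2_def)
qed

lemma l2_add: "x \<in> l2 \<Longrightarrow> y \<in> l2 \<Longrightarrow> x + y \<in> l2"
  using sums_cmod_power2_add by (auto simp: l2_def sums_iff)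

lemma l2_scaleC: "x \<in> l2 \<Longrightarrow> (\<lambda>k. a * x k) \<in> l2"
  by (simp add: l2_def norm_mult power_mult_distrib summable_mult)

lemma l2norm_add_Pythagorean:
  assumes "x \<in> l2" "y \<in> l2" "l2inner x y = 0"
  shows "(l2norm (x + y))\<^sup>2 = (l2norm x)\<^sup>2 + (l2norm y)\<^sup>2"
  using sums_cmod_power2_add[OF assms(1,2)] l2norm_power2[OF l2_add[OF assms(1,2)]] assms(3)
  by (simp add: sums_iff)

lemma sum_Cauchy_Schwarz:
  "cmod (\<Sum>k\<in>A. x k * cnj (y k))
     \<le> sqrt (\<Sum>k\<in>A. (cmod (x k))\<^sup>2) * sqrt (\<Sum>k\<in>A. (cmod (y k))\<^sup>2)"
proof -
  have "cmod (\<Sum>k\<in>A. x k * cnj (y k)) \<le> (\<Sum>k\<in>A. \<bar>cmod (x k)\<bar> * \<bar>cmod (y k)\<bar>)"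
    by (rule order_trans[OF norm_sum]) (simp add: norm_mult)
  also have "\<dots> \<le> L2_set (\<lambda>k. cmod (x k)) A * L2_set (\<lambda>k. cmod (y k)) A"
    by (rule L2_set_mult_ineq)
  finally show ?thesis by (simp add: L2_set_def)
qed

lemma l2inner_le_of_partial_sums:
  assumes "x \<in> l2" "y \<in> l2" "\<And>n. cmod (\<Sum>k<n. x k * cnj (y k)) \<le> B"
  shows "cmod (l2inner x y) \<le> B"
proof -
  have "(\<lambda>n. cmod (\<Sum>k<n. x k * cnj (y k))) \<longlonglongrightarrow> cmod (l2inner x y)"
    unfolding l2inner_def by (intro tendsto_norm summable_LIMSEQ summable_l2inner assms)
  then show ?thesis
    by (rule LIMSEQ_le_const2) (use assms(3) in auto)
qed

lemma l2inner_Cauchy_Schwarz: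
  assumes "x \<in> l2" "y \<in> l2"
  shows "cmod (l2inner x y) \<le> l2norm x * l2norm y"
proof (rule l2inner_le_of_partial_sums[OF assms])
  fix n
  have "sqrt (\<Sum>k<n. (cmod (x k))\<^sup>2) * sqrt (\<Sum>k<n. (cmod (y k))\<^sup>2) \<le> l2norm x * l2norm y"
    using assms by (intro mult_mono sqrt_sum_le_l2norm l2norm_nonneg) (auto intro: sum_nonneg)
  then show "cmod (\<Sum>k<n. x k * cnj (y k)) \<le> l2norm x * l2norm y"
    using sum_Cauchy_Schwarz[of x y "{..<n}"] by linarith
qed

section \<open>Subspaces and coordinate projections\<close>

definition l2_subspace :: "(nat \<Rightarrow> complex) set \<Rightarrow> bool" where
  "l2_subspace S \<longleftrightarrow> S \<subseteq> l2 \<and> 0 \<in> S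
     \<and> (\<forall>x\<in>S. \<forall>y\<in>S. x + y \<in> S) \<and> (\<forall>c. \<forall>x\<in>S. (\<lambda>k. c * x k) \<in> S)"

lemma l2_subspaceD:
  assumes "l2_subspace S"
  shows "S \<subseteq> l2" "0 \<in> S" "x \<in> S \<Longrightarrow> y \<in> S \<Longrightarrow> x + y \<in> S"
    "x \<in> S \<Longrightarrow> (\<lambda>k. c * x k) \<in> S"
  using assms unfolding l2_subspace_def by blast+

lemma l2_subspace_if_closed_subspace: "closed_subspace S \<Longrightarrow> l2_subspace S"
  unfolding closed_subspace_def l2_subspace_def by blast

lemma orth_diff_scaleC:
  assumes "l2_subspace M" "L \<subseteq> l2" "\<xi> \<in> orth_diff M L"
  shows "(\<lambda>k. a * \<xi> k) \<in> orth_diff M L"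
proof -
  have "\<xi> \<in> l2" "\<xi> \<in> M"
    using assms l2_subspaceD(1)[OF assms(1)] by (auto simp: orth_diff_def)
  then show ?thesis
    using assms l2_subspaceD(4)[OF assms(1)] by (auto simp: orth_diff_def l2inner_scaleC_left)
qed

definition coord_proj :: "nat set \<Rightarrow> (nat \<Rightarrow> complex) \<Rightarrow> (nat \<Rightarrow> complex)" where
  "coord_proj J x = (\<lambda>i. if i \<in> J then x i else 0)"

definition coord_subspace :: "nat set \<Rightarrow> (nat \<Rightarrow> complex) set" where
  "coord_subspace J = {x \<in> l2. \<forall>i. i \<notin> J \<longrightarrow> x i = 0}"

lemma l2_coord_proj: "x \<in> l2 \<Longrightarrow> coord_proj J x \<in> l2"
  unfolding l2_def coord_proj_def mem_Collect_eq
  by (erule summable_comparison_test'[where N = 0]) auto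

lemma coord_proj_in_coord_subspace: "x \<in> l2 \<Longrightarrow> coord_proj J x \<in> coord_subspace J"
  by (simp add: coord_subspace_def l2_coord_proj) (simp add: coord_proj_def)

lemma coord_proj_eq_self: "x \<in> coord_subspace J \<Longrightarrow> coord_proj J x = x"
  by (auto simp: coord_subspace_def coord_proj_def)

lemma coord_proj_idem [simp]: "coord_proj J (coord_proj J x) = coord_proj J x"
  by (auto simp: coord_proj_def)

lemma coord_proj_add: "coord_proj J (x + y) = coord_proj J x + coord_proj J y"
  by (auto simp: coord_proj_def)

lemma l2inner_coord_proj: "l2inner (coord_proj J x) y = l2inner x (coord_proj J y)"
  unfolding l2inner_def coord_proj_def by (auto intro!: arg_cong[where f = suminf])

lemma l2inner_coord_proj_self:
  "x \<in> l2 \<Longrightarrow> l2inner x (coord_proj J x) = of_real ((l2norm (coord_proj J x))\<^sup>2)"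
  by (metis coord_proj_idem l2_coord_proj l2inner_coord_proj l2inner_self)

lemma l2norm_coord_proj_le: "x \<in> l2 \<Longrightarrow> l2norm (coord_proj J x) \<le> l2norm x"
  unfolding l2norm_def using l2_coord_proj
  by (intro real_sqrt_le_mono suminf_le) (auto simp: l2_def coord_proj_def)

lemma l2_subspace_coord_subspace: "l2_subspace (coord_subspace J)"
  unfolding l2_subspace_def coord_subspace_def
  using finite_support_in_l2[of "{}"] by (auto intro: l2_add l2_scaleC)

lemma coord_proj_in_PD: "coord_proj J \<in> PD"
proof -
  have bounded: "bounded_op (coord_proj J)"
    unfolding bounded_op_def
  proof (intro conjI ballI allI exI)
    show "l2norm (coord_proj J x) \<le> 1 * l2norm x" if "x \<in> l2" for x
      using l2norm_coord_proj_le[OF that] by simp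
  qed (use l2_coord_proj[unfolded coord_proj_def] in \<open>auto simp: coord_proj_def\<close>)
  have "diagonal_op (coord_proj J)"
    unfolding diagonal_op_def using bounded
    by (simp add: l2inner_basis_vec) (simp add: coord_proj_def basis_vec_def)
  moreover have "orth_proj (coord_proj J)"
    unfolding orth_proj_def using bounded l2inner_coord_proj by simp
  ultimately show ?thesis
    by (simp add: PD_def)
qed

lemma finite_rank_coord_proj:
  assumes "finite J"
  shows "finite_rank (coord_proj J)"
  unfolding finite_rank_def
proof (intro exI conjI)
  show "finite (basis_vec ` J)"
    using assms by simp
  have "inj basis_vec"
    by (rule injI) (metis basis_vec_def zero_neq_one)
  have "coord_proj J x = (\<lambda>k. \<Sum>f\<in>basis_vec ` J. l2inner x f * f k)" for x
  proof -
    have "coord_proj J x = (\<lambda>k. \<Sum>i\<in>J. x i * basis_vec i k)"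
      using assms by (auto simp: fun_eq_iff coord_proj_def basis_vec_def if_distrib cong: if_cong)
    also have "\<dots> = (\<lambda>k. \<Sum>f\<in>basis_vec ` J. l2inner x f * f k)"
      using \<open>inj basis_vec\<close> by (simp add: sum.reindex inj_on_subset l2inner_basis_vec)
    finally show ?thesis .
  qed
  then show "op_range (coord_proj J) \<subseteq> {\<lambda>k. \<Sum>f\<in>basis_vec ` J. a f * f k |a. True}"
    unfolding op_range_def by blast
qed

lemma op_range_coord_proj: "op_range (coord_proj J) = coord_subspace J"
proof
  show "op_range (coord_proj J) \<subseteq> coord_subspace J"
    using coord_proj_in_coord_subspace by (auto simp: op_range_def)
  show "coord_subspace J \<subseteq> op_range (coord_proj J)"
  proof
    fix x
    assume "x \<in> coord_subspace J"
    then have "x = coord_proj J x" "x \<in> l2"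
      by (simp_all add: coord_proj_eq_self coord_subspace_def)
    then show "x \<in> op_range (coord_proj J)"
      unfolding op_range_def by (rule image_eqI)
  qed
qed

lemma PD_eq_coord_proj:
  assumes "Q \<in> PD"
  obtains J where "\<And>x. x \<in> l2 \<Longrightarrow> Q x = coord_proj J x"
proof -
  have l2_Q: "\<And>x. x \<in> l2 \<Longrightarrow> Q x \<in> l2"
    and idem: "\<And>x. x \<in> l2 \<Longrightarrow> Q (Q x) = Q x"
    and selfadj: "\<And>x y. x \<in> l2 \<Longrightarrow> y \<in> l2 \<Longrightarrow> l2inner (Q x) y = l2inner x (Q y)"
    and diag: "\<And>i j. i \<noteq> j \<Longrightarrow> Q (basis_vec j) i = 0"
    using assms by (auto simp: PD_def diagonal_op_def orth_proj_def bounded_op_def l2inner_basis_vec)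
  have basis_l2: "basis_vec i \<in> l2" for i
    by (rule finite_support_in_l2[of "{i}"]) (auto simp: basis_vec_def)
  define \<mu> where "\<mu> i = cnj (Q (basis_vec i) i)" for i
  have Q_coord: "Q x i = x i * \<mu> i" if "x \<in> l2" for x i
  proof -
    have "Q x i = l2inner x (Q (basis_vec i))"
      using selfadj[OF that basis_l2] by (simp add: l2inner_basis_vec)
    also have "\<dots> = x i * \<mu> i"
      by (subst l2inner_finite_support[of "{i}"]) (auto simp: diag \<mu>_def)
    finally show ?thesis .
  qed
  have "\<mu> i * \<mu> i = \<mu> i" for i
    using Q_coord[OF l2_Q[OF basis_l2], of i i] Q_coord[OF basis_l2, of i i] idem[OF basis_l2]
    by (simp add: basis_vec_def)
  then have "\<mu> i = 0 \<or> \<mu> i = 1" for i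
    by (metis mult_cancel_right1 mult_eq_0_iff)
  then have "Q x = coord_proj {i. \<mu> i = 1} x" if "x \<in> l2" for x
    using Q_coord[OF that] by (auto simp: fun_eq_iff coord_proj_def)
  then show ?thesis
    using that by blast
qed

lemma op_range_PD: "Q \<in> PD \<Longrightarrow> \<exists>J. op_range Q = coord_subspace J"
  by (metis PD_eq_coord_proj image_cong op_range_coord_proj op_range_def)

lemma coord_proj_in_P0SD:
  "finite J \<Longrightarrow> S \<inter> coord_subspace J = {0} \<Longrightarrow> coord_proj J \<in> P0SD S"
  using coord_proj_in_PD finite_rank_coord_proj
  by (simp add: P0SD_def P0D_def op_range_coord_proj Int_commute)

section \<open>The Friedrichs cosine\<close>

lemma friedrichs_cos_le:
  assumes "0 \<le> c"
    and "\<And>\<xi> \<eta>. \<xi> \<in> orth_diff M (M \<inter> N) \<Longrightarrow> \<eta> \<in> orth_diff N (M \<inter> N) \<Longrightarrow>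
           l2norm \<xi> = 1 \<Longrightarrow> l2norm \<eta> = 1 \<Longrightarrow> cmod (l2inner \<xi> \<eta>) \<le> c"
  shows "friedrichs_cos M N \<le> c"
  unfolding friedrichs_cos_def by (rule cSup_least) (use assms in auto)

lemma friedrichs_cos_le_1: "M \<subseteq> l2 \<Longrightarrow> N \<subseteq> l2 \<Longrightarrow> friedrichs_cos M N \<le> 1"
  by (rule friedrichs_cos_le)
    (use l2inner_Cauchy_Schwarz in \<open>fastforce simp: orth_diff_def\<close>)+

lemma
  assumes "M \<subseteq> l2" "N \<subseteq> l2"
  shows friedrichs_cos_nonneg: "0 \<le> friedrichs_cos M N"
    and friedrichs_cos_ge:
      "\<xi> \<in> orth_diff M (M \<inter> N) \<Longrightarrow> \<eta> \<in> orth_diff N (M \<inter> N) \<Longrightarrow>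
       l2norm \<xi> = 1 \<Longrightarrow> l2norm \<eta> = 1 \<Longrightarrow> cmod (l2inner \<xi> \<eta>) \<le> friedrichs_cos M N"
proof -
  have "bdd_above (insert 0 {cmod (l2inner \<xi> \<eta>) | \<xi> \<eta>.
      \<xi> \<in> orth_diff M (M \<inter> N) \<and> \<eta> \<in> orth_diff N (M \<inter> N) \<and> l2norm \<xi> = 1 \<and> l2norm \<eta> = 1})"
    using assms l2inner_Cauchy_Schwarz by (intro bdd_aboveI[where M = 1]) (fastforce simp: orth_diff_def)
  then show "0 \<le> friedrichs_cos M N"
    and "\<xi> \<in> orth_diff M (M \<inter> N) \<Longrightarrow> \<eta> \<in> orth_diff N (M \<inter> N) \<Longrightarrow>
       l2norm \<xi> = 1 \<Longrightarrow> l2norm \<eta> = 1 \<Longrightarrow> cmod (l2inner \<xi> \<eta>) \<le> friedrichs_cos M N"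
    unfolding friedrichs_cos_def by (auto intro!: cSup_upper)
qed

lemma l2inner_le_friedrichs_cos:
  assumes M: "l2_subspace M" and N: "l2_subspace N"
    and \<xi>: "\<xi> \<in> orth_diff M (M \<inter> N)" and \<eta>: "\<eta> \<in> orth_diff N (M \<inter> N)"
  shows "cmod (l2inner \<xi> \<eta>) \<le> friedrichs_cos M N * l2norm \<xi> * l2norm \<eta>"
proof -
  have l2: "M \<subseteq> l2" "N \<subseteq> l2" "M \<inter> N \<subseteq> l2"
    using l2_subspaceD(1)[OF M] l2_subspaceD(1)[OF N] by auto
  have "\<xi> \<in> l2" "\<eta> \<in> l2"
    using \<xi> \<eta> l2 by (auto simp: orth_diff_def)
  show ?thesis
  proof (cases "l2norm \<xi> = 0 \<or> l2norm \<eta> = 0")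
    case True
    then show ?thesis
      using l2inner_Cauchy_Schwarz[OF \<open>\<xi> \<in> l2\<close> \<open>\<eta> \<in> l2\<close>] by auto
  next
    case False
    then have pos: "l2norm \<xi> > 0" "l2norm \<eta> > 0"
      using l2norm_nonneg[OF \<open>\<xi> \<in> l2\<close>] l2norm_nonneg[OF \<open>\<eta> \<in> l2\<close>] by auto
    define a where "a = complex_of_real (1 / l2norm \<xi>)"
    define b where "b = complex_of_real (1 / l2norm \<eta>)"
    have "l2norm (\<lambda>k. a * \<xi> k) = 1" "l2norm (\<lambda>k. b * \<eta> k) = 1"
      using pos by (simp_all only: l2norm_scaleC \<open>\<xi> \<in> l2\<close> \<open>\<eta> \<in> l2\<close>) (simp_all add: a_def b_def norm_divide)
    then have "cmod (l2inner (\<lambda>k. a * \<xi> k) (\<lambda>k. b * \<eta> k)) \<le> friedrichs_cos M N"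
      by (intro friedrichs_cos_ge l2 orth_diff_scaleC M N \<xi> \<eta>)
    moreover have "l2inner (\<lambda>k. a * \<xi> k) (\<lambda>k. b * \<eta> k) = a * cnj b * l2inner \<xi> \<eta>"
      using \<open>\<xi> \<in> l2\<close> \<open>\<eta> \<in> l2\<close>
      by (simp add: l2inner_scaleC_left l2inner_scaleC_right l2_scaleC)
    ultimately have "cmod (l2inner \<xi> \<eta>) / (l2norm \<xi> * l2norm \<eta>) \<le> friedrichs_cos M N"
      using pos by (simp add: a_def b_def norm_mult norm_divide)
    then show ?thesis
      using pos by (simp add: divide_le_eq mult.assoc)
  qed
qed

section \<open>Bounding the cosine by finite coordinate sets\<close>

lemma exists_shift_to_trivial_coords:
  assumes S: "l2_subspace S" and "finite J"
  shows "\<exists>k \<in> S \<inter> coord_subspace J. \<exists>J' \<subseteq> J.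
           S \<inter> coord_subspace J' = {0} \<and> (\<forall>i \<in> J - J'. \<xi> i + k i = 0)"
  using \<open>finite J\<close>
proof (induction J arbitrary: \<xi> rule: finite_psubset_induct)
  case (psubset J)
  have zero: "0 \<in> S \<inter> coord_subspace J"
    using l2_subspaceD(2)[OF S] l2_subspaceD(2)[OF l2_subspace_coord_subspace] by blast
  show ?case
  proof (cases "S \<inter> coord_subspace J = {0}")
    case True
    show ?thesis
      by (intro bexI[OF _ zero] exI[of _ J] conjI True) auto
  next
    case False
    with zero obtain z where z: "z \<in> S" "z \<in> coord_subspace J" "z \<noteq> 0"
      by blast
    then obtain j where "z j \<noteq> 0"
      by (auto simp: fun_eq_iff)
    with z(2) have "j \<in> J"
      by (auto simp: coord_subspace_def)
    define a where "a = \<xi> j / z j"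
    have "J - {j} \<subset> J"
      using \<open>j \<in> J\<close> by blast
    from psubset.IH[OF this, of "\<lambda>i. \<xi> i - a * z i"]
    obtain k' J' where k': "k' \<in> S" "k' \<in> coord_subspace (J - {j})"
      and J': "J' \<subseteq> J - {j}" "S \<inter> coord_subspace J' = {0}"
      and vanish: "\<forall>i \<in> J - {j} - J'. (\<xi> i - a * z i) + k' i = 0"
      by (elim bexE exE conjE IntE) (rule that)
    define k where "k = k' + (\<lambda>i. (- a) * z i)"
    have "k \<in> S"
      unfolding k_def using S k'(1) z(1) by (intro l2_subspaceD(3,4))
    moreover have "k \<in> coord_subspace J"
      using \<open>k \<in> S\<close> l2_subspaceD(1)[OF S] k'(2) z(2) by (auto simp: coord_subspace_def k_def)
    moreover have "\<xi> i + k i = 0" if "i \<in> J - J'" for i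
    proof (cases "i = j")
      case True
      then show ?thesis
        using k'(2) \<open>z j \<noteq> 0\<close> by (simp add: k_def a_def coord_subspace_def)
    next
      case False
      then show ?thesis
        using vanish that by (simp add: k_def algebra_simps)
    qed
    ultimately show ?thesis
      using J' by (intro bexI[of _ k] exI[of _ J'] conjI IntI ballI) auto
  qed
qed

lemma l2norm_coord_proj_le_friedrichs_cos:
  assumes S: "l2_subspace S" and trivial: "S \<inter> coord_subspace J = {0}" and "\<zeta> \<in> S"
  shows "l2norm (coord_proj J \<zeta>) \<le> friedrichs_cos S (coord_subspace J) * l2norm \<zeta>"
proof -
  let ?c = "friedrichs_cos S (coord_subspace J)" and ?\<eta> = "coord_proj J \<zeta>"
  have "\<zeta> \<in> l2"
    using S \<open>\<zeta> \<in> S\<close> l2_subspaceD(1) by blast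
  have "\<zeta> \<in> orth_diff S (S \<inter> coord_subspace J)"
    and "?\<eta> \<in> orth_diff (coord_subspace J) (S \<inter> coord_subspace J)"
    using trivial \<open>\<zeta> \<in> S\<close> coord_proj_in_coord_subspace[OF \<open>\<zeta> \<in> l2\<close>] by (simp_all add: orth_diff_def)
  then have "cmod (l2inner \<zeta> ?\<eta>) \<le> ?c * l2norm \<zeta> * l2norm ?\<eta>"
    by (rule l2inner_le_friedrichs_cos[OF S l2_subspace_coord_subspace])
  then have le: "(l2norm ?\<eta>)\<^sup>2 \<le> ?c * l2norm \<zeta> * l2norm ?\<eta>"
    by (simp add: l2inner_coord_proj_self[OF \<open>\<zeta> \<in> l2\<close>] norm_power)
  have "0 \<le> ?c * l2norm \<zeta>" "0 \<le> l2norm ?\<eta>"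
    using friedrichs_cos_nonneg[OF l2_subspaceD(1)[OF S] l2_subspaceD(1)[OF l2_subspace_coord_subspace]]
      l2norm_nonneg[OF \<open>\<zeta> \<in> l2\<close>] l2norm_nonneg[OF l2_coord_proj[OF \<open>\<zeta> \<in> l2\<close>]]
    by simp_all
  then show ?thesis
    using mult_right_le_imp_le[OF le[unfolded power2_eq_square]] by fastforce
qed

lemma l2norm_coord_proj_le_cancel:
  assumes "\<xi> \<in> l2" "k \<in> coord_subspace J" "l2inner \<xi> k = 0" "0 \<le> c" "c \<le> 1"
    and le: "l2norm (coord_proj J (\<xi> + k)) \<le> c * l2norm (\<xi> + k)"
  shows "l2norm (coord_proj J \<xi>) \<le> c * l2norm \<xi>"
proof -
  have "k \<in> l2" "coord_proj J k = k"
    using assms(2) by (simp_all add: coord_subspace_def coord_proj_eq_self)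
  have "(l2norm (coord_proj J (\<xi> + k)))\<^sup>2 \<le> c\<^sup>2 * (l2norm (\<xi> + k))\<^sup>2"
    using le l2norm_nonneg[OF l2_coord_proj[OF l2_add[OF \<open>\<xi> \<in> l2\<close> \<open>k \<in> l2\<close>]]]
    by (metis power_mono power_mult_distrib)
  moreover have "(l2norm (coord_proj J (\<xi> + k)))\<^sup>2 = (l2norm (coord_proj J \<xi>))\<^sup>2 + (l2norm k)\<^sup>2"
    using assms(3) l2norm_add_Pythagorean[OF l2_coord_proj[OF \<open>\<xi> \<in> l2\<close>] \<open>k \<in> l2\<close>]
    by (simp add: coord_proj_add l2inner_coord_proj \<open>coord_proj J k = k\<close>)
  moreover have "(l2norm (\<xi> + k))\<^sup>2 = (l2norm \<xi>)\<^sup>2 + (l2norm k)\<^sup>2"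
    by (rule l2norm_add_Pythagorean[OF \<open>\<xi> \<in> l2\<close> \<open>k \<in> l2\<close> assms(3)])
  moreover have "c\<^sup>2 * (l2norm k)\<^sup>2 \<le> (l2norm k)\<^sup>2"
    using assms(4,5) by (intro mult_left_le_one_le) (auto simp: power_le_one)
  ultimately have "(l2norm (coord_proj J \<xi>))\<^sup>2 \<le> (c * l2norm \<xi>)\<^sup>2"
    by (simp add: power_mult_distrib distrib_left)
  then show ?thesis
    by (rule power2_le_imp_le) (simp add: assms(4) l2norm_nonneg[OF \<open>\<xi> \<in> l2\<close>])
qed

lemma l2norm_coord_proj_finite_le:
  assumes S: "l2_subspace S" and c: "0 \<le> c" "c \<le> 1"
    and bound: "\<And>J'. finite J' \<Longrightarrow> S \<inter> coord_subspace J' = {0} \<Longrightarrow>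
                  friedrichs_cos S (coord_subspace J') \<le> c"
    and "finite J" and \<xi>: "\<xi> \<in> orth_diff S (S \<inter> coord_subspace J)"
  shows "l2norm (coord_proj J \<xi>) \<le> c * l2norm \<xi>"
proof -
  have "\<xi> \<in> S" "\<xi> \<in> l2"
    using \<xi> l2_subspaceD(1)[OF S] by (auto simp: orth_diff_def)
  obtain k J' where k: "k \<in> S" "k \<in> coord_subspace J" and "J' \<subseteq> J"
    and trivial: "S \<inter> coord_subspace J' = {0}" and vanish: "\<forall>i \<in> J - J'. \<xi> i + k i = 0"
    using exists_shift_to_trivial_coords[OF S \<open>finite J\<close>, of \<xi>] by blast
  have orth: "l2inner \<xi> k = 0"
    using k \<xi> by (auto simp: orth_diff_def)
  have "\<xi> + k \<in> S"
    using S \<open>\<xi> \<in> S\<close> k(1) by (rule l2_subspaceD(3))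
  then have "\<xi> + k \<in> l2"
    using l2_subspaceD(1)[OF S] by blast
  have "coord_proj J (\<xi> + k) = coord_proj J' (\<xi> + k)"
    using vanish \<open>J' \<subseteq> J\<close> by (auto simp: coord_proj_def fun_eq_iff)
  moreover have "l2norm (coord_proj J' (\<xi> + k)) \<le> friedrichs_cos S (coord_subspace J') * l2norm (\<xi> + k)"
    by (rule l2norm_coord_proj_le_friedrichs_cos[OF S trivial \<open>\<xi> + k \<in> S\<close>])
  moreover have "\<dots> \<le> c * l2norm (\<xi> + k)"
    using \<open>finite J\<close> \<open>J' \<subseteq> J\<close> finite_subset
    by (intro mult_right_mono bound trivial l2norm_nonneg \<open>\<xi> + k \<in> l2\<close>) auto
  ultimately have "l2norm (coord_proj J (\<xi> + k)) \<le> c * l2norm (\<xi> + k)"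
    by simp
  then show ?thesis
    by (rule l2norm_coord_proj_le_cancel[OF \<open>\<xi> \<in> l2\<close> k(2) orth c])
qed

lemma friedrichs_cos_coord_subspace_le:
  assumes S: "l2_subspace S" and c: "0 \<le> c" "c \<le> 1"
    and bound: "\<And>J'. finite J' \<Longrightarrow> S \<inter> coord_subspace J' = {0} \<Longrightarrow>
                  friedrichs_cos S (coord_subspace J') \<le> c"
  shows "friedrichs_cos S (coord_subspace J) \<le> c"
proof (rule friedrichs_cos_le[OF c(1)])
  fix \<xi> \<eta>
  assume \<xi>: "\<xi> \<in> orth_diff S (S \<inter> coord_subspace J)"
    and \<eta>: "\<eta> \<in> orth_diff (coord_subspace J) (S \<inter> coord_subspace J)"
    and unit: "l2norm \<xi> = 1" "l2norm \<eta> = 1"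
  have "\<xi> \<in> l2" "\<eta> \<in> coord_subspace J" "\<eta> \<in> l2"
    using \<xi> \<eta> l2_subspaceD(1)[OF S] by (auto simp: orth_diff_def coord_subspace_def)
  show "cmod (l2inner \<xi> \<eta>) \<le> c"
  proof (rule l2inner_le_of_partial_sums[OF \<open>\<xi> \<in> l2\<close> \<open>\<eta> \<in> l2\<close>])
    fix n
    define A where "A = J \<inter> {..<n}"
    have "(\<Sum>k<n. \<xi> k * cnj (\<eta> k)) = l2inner \<xi> (coord_proj A \<eta>)"
      using \<open>\<eta> \<in> coord_subspace J\<close>
      by (subst l2inner_finite_support[of "{..<n}"])
        (auto simp: A_def coord_proj_def coord_subspace_def intro!: sum.cong)
    also have "\<dots> = l2inner (coord_proj A \<xi>) \<eta>"
      by (simp add: l2inner_coord_proj)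
    finally have "cmod (\<Sum>k<n. \<xi> k * cnj (\<eta> k)) \<le> l2norm (coord_proj A \<xi>) * l2norm \<eta>"
      using l2inner_Cauchy_Schwarz[OF l2_coord_proj[OF \<open>\<xi> \<in> l2\<close>] \<open>\<eta> \<in> l2\<close>] by simp
    also have "\<dots> \<le> c * l2norm \<xi> * l2norm \<eta>"
    proof (intro mult_right_mono l2norm_nonneg \<open>\<eta> \<in> l2\<close>)
      have "\<xi> \<in> orth_diff S (S \<inter> coord_subspace A)"
        using \<xi> by (auto simp: orth_diff_def coord_subspace_def A_def)
      then show "l2norm (coord_proj A \<xi>) \<le> c * l2norm \<xi>"
        using l2norm_coord_proj_finite_le[OF S c bound] by (simp add: A_def)
    qed
    finally show "cmod (\<Sum>k<n. \<xi> k * cnj (\<eta> k)) \<le> c"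
      using unit by simp
  qed
qed

lemma cSUP_subset_eq:
  fixes f :: "'a \<Rightarrow> 'b::conditionally_complete_lattice"
  assumes "A \<subseteq> B" "A \<noteq> {}" "\<And>x. x \<in> B \<Longrightarrow> f x \<le> (SUP x\<in>A. f x)"
  shows "(SUP x\<in>B. f x) = (SUP x\<in>A. f x)"
proof (rule antisym)
  show "(SUP x\<in>B. f x) \<le> (SUP x\<in>A. f x)"
    using assms by (intro cSUP_least) auto
  show "(SUP x\<in>A. f x) \<le> (SUP x\<in>B. f x)"
    using assms by (intro cSUP_subset_mono bdd_aboveI2[where M = "SUP x\<in>A. f x"]) auto
qed

lemma friedrichs_cos_le_SUP_P0SD:
  assumes S: "l2_subspace S" and "Q \<in> PD"
  shows "friedrichs_cos S (op_range Q) \<le> (SUP Q\<in>P0SD S. friedrichs_cos S (op_range Q))"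
proof -
  let ?cos = "\<lambda>Q. friedrichs_cos S (op_range Q)"
  define c where "c = (SUP Q\<in>P0SD S. ?cos Q)"
  have cos_le_1: "?cos Q \<le> 1" if "Q \<in> PD" for Q
    using op_range_PD[OF that] l2_subspaceD(1)[OF S] l2_subspaceD(1)[OF l2_subspace_coord_subspace]
    by (metis friedrichs_cos_le_1)
  have "coord_proj {} \<in> P0SD S"
    using l2_subspaceD(1,2)[OF S] by (intro coord_proj_in_P0SD) (auto simp: coord_subspace_def)
  have bdd: "bdd_above (?cos ` P0SD S)"
    using cos_le_1 by (intro bdd_aboveI2[where M = 1]) (auto simp: P0SD_def P0D_def)
  have "0 \<le> ?cos (coord_proj {})"
    unfolding op_range_coord_proj
    by (rule friedrichs_cos_nonneg[OF l2_subspaceD(1)[OF S] l2_subspaceD(1)[OF l2_subspace_coord_subspace]])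
  then have "0 \<le> c"
    unfolding c_def by (rule cSUP_upper2[OF bdd \<open>coord_proj {} \<in> P0SD S\<close>])
  have "c \<le> 1"
    unfolding c_def using \<open>coord_proj {} \<in> P0SD S\<close> cos_le_1
    by (intro cSUP_least) (auto simp: P0SD_def P0D_def)
  have bound: "friedrichs_cos S (coord_subspace J) \<le> c"
    if "finite J" "S \<inter> coord_subspace J = {0}" for J
    using cSUP_upper[OF coord_proj_in_P0SD[OF that] bdd] by (simp add: c_def op_range_coord_proj)
  show ?thesis
    using op_range_PD[OF \<open>Q \<in> PD\<close>] friedrichs_cos_coord_subspace_le[OF S \<open>0 \<le> c\<close> \<open>c \<le> 1\<close> bound]
    by (metis c_def)
qed

theorem proposition4p15:
  assumes "closed_subspace S"
  shows "((SUP Q\<in>PD. friedrichs_cos S (op_range Q)) < 1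
            \<longleftrightarrow> (SUP Q\<in>P0D. friedrichs_cos S (op_range Q)) < 1)
       \<and> ((SUP Q\<in>P0D. friedrichs_cos S (op_range Q)) < 1
            \<longleftrightarrow> (SUP Q\<in>P0SD S. friedrichs_cos S (op_range Q)) < 1)"
proof -
  have S: "l2_subspace S"
    using assms by (rule l2_subspace_if_closed_subspace)
  let ?cos = "\<lambda>Q. friedrichs_cos S (op_range Q)"
  have "coord_proj {} \<in> P0SD S"
    using l2_subspaceD(1,2)[OF S] by (intro coord_proj_in_P0SD) (auto simp: coord_subspace_def)
  moreover have "P0SD S \<subseteq> P0D" "P0D \<subseteq> PD"
    by (auto simp: P0SD_def P0D_def)
  moreover note friedrichs_cos_le_SUP_P0SD[OF S]
  ultimately have "(SUP Q\<in>PD. ?cos Q) = (SUP Q\<in>P0SD S. ?cos Q)"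
    and "(SUP Q\<in>P0D. ?cos Q) = (SUP Q\<in>P0SD S. ?cos Q)"
    by (intro cSUP_subset_eq; blast)+
  then show ?thesis
    by simp
qed

end
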